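(* Let $0<\rho<1$ and $r>0$, let $a=\rho r/(1-\rho^2)$, and let $\phi(x)=1-e^{-a\|x\|}$ for $x\in\mathbb{R}^2$. Then for every $x\in\mathbb{R}^2$ with $\|x\|=r$, $$T_\rho\phi(x)\ge1-e^{-\frac{\rho^2r^2}{2(1-\rho^2)}}\int_0^\infty\gamma_1(t)\,dt-e^{\frac32\frac{\rho^2r^2}{1-\rho^2}}\int_{-\infty}^{-\frac{2\rho r}{\sqrt{1-\rho^2}}}\gamma_1(t)\,dt.$$
   Context: $\gamma_m$ is the standard Gaussian density on $\mathbb{R}^m$; $T_\rho u(x)=\int_{\mathbb{R}^2}u(\rho x+y\sqrt{1-\rho^2})\gamma_2(y)\,dy$. *)

theory Defs
  imports "HOL-Analysis.Analysis"
begin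

definition gamma1 :: "real \<Rightarrow> real" where
  "gamma1 t = exp (- t\<^sup>2 / 2) / sqrt (2 * pi)"

definition gamma2 :: "real^2 \<Rightarrow> real" where
  "gamma2 y = exp (- (norm y)\<^sup>2 / 2) / (2 * pi)"

definition T_rho :: "real \<Rightarrow> (real^2 \<Rightarrow> real) \<Rightarrow> real^2 \<Rightarrow> real" where
  "T_rho \<rho> u x = (\<integral>y. u (\<rho> *\<^sub>R x + sqrt (1 - \<rho>\<^sup>2) *\<^sub>R y) * gamma2 y \<partial>lborel)"

end

theory Submission
  imports Defs "HOL-Probability.Probability"
begin

text \<open>
  Write \<open>s = sqrt (1 - \<rho>\<^sup>2)\<close>, \<open>u = x / r\<close> and \<open>c = \<rho> r / s\<close>, so that \<open>a s = c\<close>.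
  Then \<open>T_rho \<rho> \<phi> x = 1 - E exp (-a \<parallel>\<rho> x + s Y\<parallel>)\<close> for a standard Gaussian \<open>Y\<close>, and
  \<open>\<parallel>\<rho> x + s Y\<parallel> \<ge> \<bar>(\<rho> x + s Y) \<bullet> u\<bar> = s \<bar>c + Y \<bullet> u\<bar>\<close>.  By rotation invariance
  \<open>Y \<bullet> u\<close> is a standard Gaussian \<open>t\<close>, and completing the square in
  \<open>\<gamma>\<^sub>1(t) exp (-c \<bar>c + t\<bar>)\<close> separately on \<open>t > -c\<close> and \<open>t \<le> -c\<close> turns the two pieces
  into Gaussian densities centred at \<open>-c\<close> and \<open>c\<close>, with factors \<open>exp (-c\<^sup>2/2)\<close> and
  \<open>exp (3c\<^sup>2/2)\<close>.
\<close>

lemma gamma1_eq_std_normal_density: "gamma1 = std_normal_density"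
  by (auto simp: gamma1_def std_normal_density_def fun_eq_iff)

lemma normal_density_unit_variance: "normal_density m 1 t = gamma1 (t - m)"
  by (simp add: normal_density_def gamma1_def)

lemma gamma1_nonneg: "0 \<le> gamma1 t"
  by (simp add: gamma1_def)

lemma gamma2_nonneg: "0 \<le> gamma2 y"
  by (simp add: gamma2_def)

lemma borel_measurable_gamma1 [measurable]: "gamma1 \<in> borel_measurable borel"
  unfolding gamma1_def by measurable

lemma borel_measurable_gamma2 [measurable]: "gamma2 \<in> borel_measurable borel"
  unfolding gamma2_def by measurable

lemma gamma2_vector: "gamma2 (vector [a, b]) = gamma1 a * gamma1 b"
proof -
  have "(norm (vector [a, b] :: real^2))\<^sup>2 = a\<^sup>2 + b\<^sup>2"
    by (simp only: power2_norm_eq_inner) (simp add: inner_vec_def sum_2 power2_eq_square)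
  moreover have "exp (- (a\<^sup>2 + b\<^sup>2) / 2) = exp (- a\<^sup>2 / 2) * exp (- b\<^sup>2 / 2)"
    by (simp add: exp_add[symmetric] field_simps)
  moreover have "sqrt (2 * pi) * sqrt (2 * pi) = 2 * pi"
    by simp
  ultimately show ?thesis
    unfolding gamma2_def gamma1_def by (metis times_divide_times_eq)
qed

lemma gamma2_orthogonal_transformation:
  "orthogonal_transformation Q \<Longrightarrow> gamma2 (Q y) = gamma2 y"
  by (simp add: gamma2_def orthogonal_transformation_norm)

lemma inner_real2: "(v::real^2) \<bullet> w = v$1 * w$1 + v$2 * w$2"
  by (simp add: inner_vec_def sum_2)

lemma vector_pair_eq_sum_axis:
  "(\<lambda>p::real \<times> real. vector [fst p, snd p] :: real^2) = (\<lambda>p. fst p *\<^sub>R axis 1 1 + snd p *\<^sub>R axis 2 1)"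
  by (auto simp: vec_eq_iff forall_2 axis_def)

lemma borel_measurable_vector_pair [measurable]:
  "(\<lambda>p::real \<times> real. vector [fst p, snd p] :: real^2) \<in> borel_measurable (lborel \<Otimes>\<^sub>M lborel)"
  unfolding vector_pair_eq_sum_axis by measurable

lemma distr_vector_pair_lborel:
  "distr (lborel \<Otimes>\<^sub>M lborel) borel (\<lambda>p::real \<times> real. vector [fst p, snd p] :: real^2) = lborel"
proof (rule lborel_eqI[symmetric])
  fix l u :: "real^2"
  assume "\<And>b. b \<in> Basis \<Longrightarrow> l \<bullet> b \<le> u \<bullet> b"
  then have "l$1 \<le> u$1" "l$2 \<le> u$2"
    by (auto simp: Basis_vec_def cart_eq_inner_axis)
  moreover have "(\<lambda>p::real \<times> real. vector [fst p, snd p] :: real^2) -` box l u \<inter> space (lborel \<Otimes>\<^sub>M lborel)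
      = {l$1<..<u$1} \<times> {l$2<..<u$2}"
    by (auto simp: mem_box_cart forall_2 space_pair_measure)
  moreover have "(\<Prod>b\<in>Basis. (u - l) \<bullet> b) = (u$1 - l$1) * (u$2 - l$2)"
    by (simp add: Basis_vec_def UNION_singleton_eq_range prod.reindex axis_eq_axis inj_on_def
        cart_eq_inner_axis[symmetric] UNIV_2)
  ultimately show "emeasure (distr (lborel \<Otimes>\<^sub>M lborel) borel (\<lambda>p::real \<times> real. vector [fst p, snd p] :: real^2)) (box l u)
      = (\<Prod>b\<in>Basis. (u - l) \<bullet> b)"
    by (simp add: emeasure_distr lborel.emeasure_pair_measure_Times ennreal_mult)
qed simp

lemma distr_orthogonal_transformation_lborel:
  fixes Q :: "real^'n::{finite,wellorder} \<Rightarrow> real^'n::_"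
  assumes Q: "orthogonal_transformation Q"
  shows "distr lborel borel Q = lborel"
proof (rule lborel_eqI[symmetric])
  fix l u
  have "linear Q"
    using Q by (rule orthogonal_transformation_linear)
  then have meas: "Q \<in> borel_measurable lborel"
    by (simp add: linear_continuous_on linear_conv_bounded_linear borel_measurable_continuous_onI)
  have Q': "orthogonal_transformation (inv Q)"
    using Q by (rule orthogonal_transformation_inv)
  have preimage: "Q -` box l u = inv Q ` box l u"
    using Q by (simp add: orthogonal_transformation_bij bij_vimage_eq_inv_image)
  have "box l u \<in> lmeasurable"
    by simp
  then have "emeasure lebesgue (inv Q ` box l u) = emeasure lebesgue (box l u)"
    using Q' by (simp add: measurable_orthogonal_image measure_orthogonal_image emeasure_eq_measure2)
  moreover have "inv Q ` box l u \<in> sets lborel"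
    using measurable_sets[OF meas, of "box l u"] by (simp add: preimage)
  ultimately have "emeasure lborel (Q -` box l u) = emeasure lborel (box l u)"
    by (simp add: preimage)
  moreover assume "\<And>b. b \<in> Basis \<Longrightarrow> l \<bullet> b \<le> u \<bullet> b"
  ultimately show "emeasure (distr lborel borel Q) (box l u) = (\<Prod>b\<in>Basis. (u - l) \<bullet> b)"
    using meas by (simp add: emeasure_distr emeasure_lborel_box_eq)
qed simp

lemma integral_gamma2_first_coordinate:
  fixes g :: "real \<Rightarrow> real"
  assumes [measurable]: "g \<in> borel_measurable borel"
  shows "(\<integral>z. g (z$1) * gamma2 z \<partial>lborel) = (\<integral>t. gamma1 t * g t \<partial>lborel)"
proof -
  define P where "P = density lborel (\<lambda>t. ennreal (gamma1 t))"
  interpret P: prob_space P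
    unfolding P_def gamma1_eq_std_normal_density by (rule prob_space_normal_density) simp
  have "P \<Otimes>\<^sub>M P = density (lborel \<Otimes>\<^sub>M lborel) (\<lambda>p. ennreal (gamma1 (fst p) * gamma1 (snd p)))"
    unfolding P_def
    by (subst pair_measure_density)
      (auto simp: ennreal_mult[symmetric] gamma1_nonneg sigma_finite_lborel P.sigma_finite_measure[unfolded P_def]
        intro!: density_cong)
  then have product: "(\<integral>p. g (fst p) * (gamma1 (fst p) * gamma1 (snd p)) \<partial>(lborel \<Otimes>\<^sub>M lborel))
      = (\<integral>p. g (fst p) \<partial>(P \<Otimes>\<^sub>M P))"
    by (simp add: integral_density gamma1_nonneg mult.commute)
  have "(\<integral>z. g (z$1) * gamma2 z \<partial>lborel)
      = (\<integral>z. g (z$1) * gamma2 z \<partial>distr (lborel \<Otimes>\<^sub>M lborel) borel (\<lambda>p::real \<times> real. vector [fst p, snd p] :: real^2))"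
    by (simp add: distr_vector_pair_lborel)
  also have "\<dots> = (\<integral>p. g (fst p) \<partial>(P \<Otimes>\<^sub>M P))"
    by (simp add: integral_distr gamma2_vector product)
  also have "\<dots> = (\<integral>t. g t \<partial>distr (P \<Otimes>\<^sub>M P) P fst)"
    by (subst integral_distr) (auto simp: P_def)
  also have "\<dots> = (\<integral>t. g t \<partial>P)"
    by (simp add: P.distr_pair_fst)
  also have "\<dots> = (\<integral>t. gamma1 t * g t \<partial>lborel)"
    unfolding P_def by (subst integral_density) (auto simp: gamma1_nonneg)
  finally show ?thesis .
qed

lemma integral_gamma2_inner_unit:
  fixes u :: "real^2" and g :: "real \<Rightarrow> real"
  assumes u: "norm u = 1" and [measurable]: "g \<in> borel_measurable borel"
  shows "(\<integral>y. g (y \<bullet> u) * gamma2 y \<partial>lborel) = (\<integral>t. gamma1 t * g t \<partial>lborel)"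
proof -
  \<comment> \<open>the rotation taking the first basis vector to \<open>u\<close>\<close>
  define Q where "Q z = (vector [u$1 * z$1 - u$2 * z$2, u$2 * z$1 + u$1 * z$2] :: real^2)" for z :: "real^2"
  have unit: "u$1 * u$1 + u$2 * u$2 = 1"
    using u by (metis inner_real2 norm_eq_1)
  have Q1: "Q z $ 1 = u$1 * z$1 - u$2 * z$2" and Q2: "Q z $ 2 = u$2 * z$1 + u$1 * z$2" for z
    by (simp_all add: Q_def)
  have "Q v \<bullet> Q w = (u$1 * u$1 + u$2 * u$2) * (v$1 * w$1 + v$2 * w$2)" for v w
    unfolding inner_real2 Q1 Q2 by algebra
  then have "Q v \<bullet> Q w = v \<bullet> w" for v w
    by (simp add: unit inner_real2)
  moreover have "linear Q"
    by (rule linearI) (auto simp: vec_eq_iff forall_2 Q1 Q2 algebra_simps)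
  ultimately have orth: "orthogonal_transformation Q"
    unfolding orthogonal_transformation_def by blast
  have "Q z \<bullet> u = (u$1 * u$1 + u$2 * u$2) * z$1" for z
    unfolding inner_real2 Q1 Q2 by algebra
  then have Qu: "Q z \<bullet> u = z$1" for z
    by (simp add: unit)
  have [measurable]: "Q \<in> borel_measurable lborel"
    using \<open>linear Q\<close>
    by (simp add: linear_continuous_on linear_conv_bounded_linear borel_measurable_continuous_onI)
  have "(\<integral>y. g (y \<bullet> u) * gamma2 y \<partial>lborel) = (\<integral>y. g (y \<bullet> u) * gamma2 y \<partial>distr lborel borel Q)"
    by (simp add: distr_orthogonal_transformation_lborel[OF orth])
  also have "\<dots> = (\<integral>z. g (z$1) * gamma2 z \<partial>lborel)"
    by (subst integral_distr) (auto simp: Qu gamma2_orthogonal_transformation[OF orth])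
  also have "\<dots> = (\<integral>t. gamma1 t * g t \<partial>lborel)"
    by (rule integral_gamma2_first_coordinate) simp
  finally show ?thesis .
qed

lemma gamma1_mult_exp_complete_square:
  assumes "- t\<^sup>2 / 2 + e = k + - (t - m)\<^sup>2 / 2"
  shows "gamma1 t * exp e = exp k * gamma1 (t - m)"
proof -
  have "exp (- t\<^sup>2 / 2) * exp e = exp k * exp (- (t - m)\<^sup>2 / 2)"
    using assms by (simp only: mult_exp_exp)
  then show ?thesis
    by (simp add: gamma1_def)
qed

lemma gamma1_mult_exp_neg_abs:
  fixes c t :: real
  shows "gamma1 t * exp (- c * \<bar>c + t\<bar>)
    = exp (- c\<^sup>2 / 2) * (gamma1 (t - - c) * indicator {-c<..} t)
      + exp (3/2 * c\<^sup>2) * (gamma1 (t - c) * indicator {..-c} t)"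
proof (cases "t > -c")
  case True
  then have "- t\<^sup>2 / 2 + - c * \<bar>c + t\<bar> = - c\<^sup>2 / 2 + - (t - - c)\<^sup>2 / 2"
    by (simp add: power2_eq_square field_simps)
  then have "gamma1 t * exp (- c * \<bar>c + t\<bar>) = exp (- c\<^sup>2 / 2) * gamma1 (t - - c)"
    by (rule gamma1_mult_exp_complete_square)
  with True show ?thesis
    by simp
next
  case False
  then have "- t\<^sup>2 / 2 + - c * \<bar>c + t\<bar> = 3/2 * c\<^sup>2 + - (t - c)\<^sup>2 / 2"
    by (simp add: power2_eq_square field_simps)
  then have "gamma1 t * exp (- c * \<bar>c + t\<bar>) = exp (3/2 * c\<^sup>2) * gamma1 (t - c)"
    by (rule gamma1_mult_exp_complete_square)
  with False show ?thesis
    by simp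
qed

lemma integral_gamma1_exp_neg_abs_le:
  fixes c :: real
  shows "(\<integral>t. gamma1 t * exp (- c * \<bar>c + t\<bar>) \<partial>lborel)
    \<le> exp (- c\<^sup>2 / 2) * (\<integral>t\<in>{0..}. gamma1 t \<partial>lborel)
      + exp (3/2 * c\<^sup>2) * (\<integral>t\<in>{..- (2 * c)}. gamma1 t \<partial>lborel)"
proof -
  have integrable: "integrable lborel (\<lambda>t. gamma1 (t - m) * indicator A t)" if "A \<in> sets borel" for m A
    using that by (intro integrable_real_mult_indicator) (simp_all flip: normal_density_unit_variance)
  have shift: "(\<integral>t. gamma1 (t - m) * indicator A t \<partial>lborel) = (\<integral>t. gamma1 t * indicator A (t + m) \<partial>lborel)"
    for m :: real and A
    using lborel_integral_real_affine[of 1 "\<lambda>t. gamma1 (t - m) * indicator A t" m]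
    by (simp add: add.commute)
  have "(\<integral>t. gamma1 t * exp (- c * \<bar>c + t\<bar>) \<partial>lborel)
      = exp (- c\<^sup>2 / 2) * (\<integral>t. gamma1 (t - - c) * indicator {-c<..} t \<partial>lborel)
        + exp (3/2 * c\<^sup>2) * (\<integral>t. gamma1 (t - c) * indicator {..-c} t \<partial>lborel)"
    unfolding gamma1_mult_exp_neg_abs
    using integrable[of "{-c<..}" "-c"] integrable[of "{..-c}" c] by simp
  also have "(\<integral>t. gamma1 (t - - c) * indicator {-c<..} t \<partial>lborel) = (\<integral>t. gamma1 t * indicator {0<..} t \<partial>lborel)"
    unfolding shift by (rule Bochner_Integration.integral_cong) (auto simp: indicator_def)
  also have "(\<integral>t. gamma1 (t - c) * indicator {..-c} t \<partial>lborel) = (\<integral>t\<in>{..- (2 * c)}. gamma1 t \<partial>lborel)"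
    unfolding shift set_lebesgue_integral_def
    by (rule Bochner_Integration.integral_cong) (auto simp: indicator_def)
  also have "(\<integral>t. gamma1 t * indicator {0<..} t \<partial>lborel) \<le> (\<integral>t\<in>{0..}. gamma1 t \<partial>lborel)"
    unfolding set_lebesgue_integral_def
    by (intro integral_mono integrable_real_mult_indicator integrable_mult_indicator)
      (auto simp: gamma1_eq_std_normal_density indicator_def)
  finally show ?thesis
    by simp
qed

lemma integral_gamma2: "(\<integral>y. gamma2 y \<partial>lborel) = 1"
  using integral_gamma2_first_coordinate[of "\<lambda>_. 1"] by (simp add: gamma1_eq_std_normal_density)

lemma integrable_gamma2: "integrable lborel gamma2"
  using integral_gamma2 not_integrable_integral_eq by fastforce

lemma integrable_bounded_mult_gamma2:
  fixes f :: "real^2 \<Rightarrow> real"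
  assumes "f \<in> borel_measurable borel" "\<And>y. \<bar>f y\<bar> \<le> 1"
  shows "integrable lborel (\<lambda>y. f y * gamma2 y)"
  using assms
  by (intro Bochner_Integration.integrable_bound[OF integrable_gamma2])
    (auto simp: gamma2_nonneg abs_mult intro!: mult_left_le_one_le)

lemma T_rho_one_minus:
  fixes f :: "real^2 \<Rightarrow> real"
  assumes [measurable]: "f \<in> borel_measurable borel" and bounded: "\<And>z. \<bar>f z\<bar> \<le> 1"
  shows "T_rho \<rho> (\<lambda>z. 1 - f z) x = 1 - (\<integral>y. f (\<rho> *\<^sub>R x + sqrt (1 - \<rho>\<^sup>2) *\<^sub>R y) * gamma2 y \<partial>lborel)"
proof -
  have "integrable lborel (\<lambda>y. f (\<rho> *\<^sub>R x + sqrt (1 - \<rho>\<^sup>2) *\<^sub>R y) * gamma2 y)"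
    using bounded by (intro integrable_bounded_mult_gamma2) auto
  then show ?thesis
    unfolding T_rho_def using integrable_gamma2
    by (simp add: left_diff_distrib integral_gamma2)
qed

lemma integral_exp_neg_norm_le:
  fixes u v :: "real^2" and a s :: real
  assumes u: "norm u = 1" and a: "0 \<le> a"
  shows "(\<integral>y. exp (- a * norm (v + s *\<^sub>R y)) * gamma2 y \<partial>lborel)
    \<le> (\<integral>t. gamma1 t * exp (- a * \<bar>v \<bullet> u + s * t\<bar>) \<partial>lborel)"
proof -
  have "\<bar>v \<bullet> u + s * (y \<bullet> u)\<bar> \<le> norm (v + s *\<^sub>R y)" for y
    using Cauchy_Schwarz_ineq2[of "v + s *\<^sub>R y" u] u by (simp add: inner_add_left)
  then have "exp (- a * norm (v + s *\<^sub>R y)) \<le> exp (- a * \<bar>v \<bullet> u + s * (y \<bullet> u)\<bar>)" for y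
    using a by (simp add: mult_left_mono)
  then have "(\<integral>y. exp (- a * norm (v + s *\<^sub>R y)) * gamma2 y \<partial>lborel)
      \<le> (\<integral>y. exp (- a * \<bar>v \<bullet> u + s * (y \<bullet> u)\<bar>) * gamma2 y \<partial>lborel)"
    using a
    by (intro integral_mono integrable_bounded_mult_gamma2)
      (auto simp: gamma2_nonneg mult_right_mono)
  also have "\<dots> = (\<integral>t. gamma1 t * exp (- a * \<bar>v \<bullet> u + s * t\<bar>) \<partial>lborel)"
    using u by (rule integral_gamma2_inner_unit) simp
  finally show ?thesis .
qed

lemma T_rho_one_minus_exp_norm_ge:
  fixes \<rho> :: real and x :: "real^2"
  assumes "0 \<le> \<rho>" "\<rho>\<^sup>2 < 1" "x \<noteq> 0"
  defines "s \<equiv> sqrt (1 - \<rho>\<^sup>2)"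
  defines "c \<equiv> \<rho> * norm x / s"
  shows "T_rho \<rho> (\<lambda>z. 1 - exp (- (c / s) * norm z)) x \<ge>
           1 - exp (- c\<^sup>2 / 2) * (\<integral>t\<in>{0..}. gamma1 t \<partial>lborel)
             - exp (3/2 * c\<^sup>2) * (\<integral>t\<in>{..- (2 * c)}. gamma1 t \<partial>lborel)"
proof -
  define u where "u = (1 / norm x) *\<^sub>R x"
  have "s > 0" and "0 \<le> c"
    using assms(1-3) by (simp_all add: s_def c_def)
  have "norm u = 1" and "(\<rho> *\<^sub>R x) \<bullet> u = s * c"
    using assms(3) \<open>s > 0\<close> by (simp_all add: u_def c_def dot_square_norm power2_eq_square)
  then have "(\<integral>y. exp (- (c / s) * norm (\<rho> *\<^sub>R x + s *\<^sub>R y)) * gamma2 y \<partial>lborel)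
      \<le> (\<integral>t. gamma1 t * exp (- c * \<bar>c + t\<bar>) \<partial>lborel)"
    using integral_exp_neg_norm_le[of u "c / s" "\<rho> *\<^sub>R x" s] \<open>0 \<le> c\<close> \<open>s > 0\<close>
    by (simp add: distrib_left[symmetric] abs_mult)
  also note integral_gamma1_exp_neg_abs_le[of c]
  finally show ?thesis
    using T_rho_one_minus[of "\<lambda>z. exp (- (c / s) * norm z)" \<rho> x] \<open>0 \<le> c\<close> assms(2)
    by (simp only: s_def) simp
qed

theorem lemma7p1:
  fixes \<rho> r :: real and x :: "real^2"
  assumes "0 < \<rho>" "\<rho> < 1" "0 < r" "norm x = r"
  defines "a \<equiv> \<rho> * r / (1 - \<rho>\<^sup>2)"
  defines "\<phi> \<equiv> (\<lambda>z :: real^2. 1 - exp (- a * norm z))"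
  shows "T_rho \<rho> \<phi> x \<ge>
           1 - exp (- (\<rho>\<^sup>2 * r\<^sup>2) / (2 * (1 - \<rho>\<^sup>2))) * (\<integral>t\<in>{0..}. gamma1 t \<partial>lborel)
             - exp (3/2 * (\<rho>\<^sup>2 * r\<^sup>2 / (1 - \<rho>\<^sup>2)))
                 * (\<integral>t\<in>{..- (2 * \<rho> * r / sqrt (1 - \<rho>\<^sup>2))}. gamma1 t \<partial>lborel)"
proof -
  define s where "s = sqrt (1 - \<rho>\<^sup>2)"
  define c where "c = \<rho> * r / s"
  have "\<rho>\<^sup>2 < 1"
    using assms(1,2) by (simp add: power_less_one_iff)
  then have s2: "s\<^sup>2 = 1 - \<rho>\<^sup>2"
    by (simp add: s_def)
  have "a = c / s"
    unfolding a_def c_def s2[symmetric] by (simp add: power2_eq_square)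
  moreover have "c\<^sup>2 = \<rho>\<^sup>2 * r\<^sup>2 / (1 - \<rho>\<^sup>2)"
    unfolding c_def power_divide power_mult_distrib s2 ..
  moreover have "- (\<rho>\<^sup>2 * r\<^sup>2) / (2 * (1 - \<rho>\<^sup>2)) = - c\<^sup>2 / 2"
    by (simp add: \<open>c\<^sup>2 = _\<close>)
  moreover have "2 * \<rho> * r / sqrt (1 - \<rho>\<^sup>2) = 2 * c"
    by (simp add: c_def s_def)
  ultimately show ?thesis
    using T_rho_one_minus_exp_norm_ge[of \<rho> x] assms(1,3,4) \<open>\<rho>\<^sup>2 < 1\<close>
    by (simp only: \<phi>_def s_def[symmetric] c_def[symmetric]) auto
qed

end
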